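(* Let $m,v,x,y$ be nonzero real numbers, let $s>0$ and let $u,w\in\mathbb{R}$. Let $\mathfrak{n}$ be the five-dimensional real Lie algebra with basis $\{E_1,\dots,E_5\}$ whose only non-vanishing brackets (up to antisymmetry) are $$[E_1,E_2]=mE_3+sE_4+uE_5,\qquad [E_1,E_3]=vE_4+wE_5,\qquad [E_1,E_4]=xE_5,\qquad [E_2,E_3]=yE_5.$$ Equip the corresponding simply connected nilpotent Lie group with the left-invariant Riemannian metric for which $\{E_1,\dots,E_5\}$ is orthonormal. Then this metric is not an algebraic Ricci soliton.
   Context: Let $G$ be a Lie group with Lie algebra $\mathfrak{g}$ and let $g$ be a left-invariant Riemannian metric on $G$. Let $\mathrm{Ric}$ denote the $(1,1)$ Ricci tensor of $g$, viewed as a linear endomorphism of $\mathfrak{g}$. The metric $g$ is an algebraic Ricci soliton if there are a real number $c$ and a derivation $D$ of $\mathfrak{g}$ such that $\mathrm{Ric}=c\,\mathrm{Id}+D$. *)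

theory Defs
  imports "HOL-Analysis.Analysis"
begin

text \<open>A real Lie algebra structure is modelled by a bilinear bracket on a Euclidean space 'a;
  the left-invariant metric is the inner product of 'a (so the elements of Basis are orthonormal).\<close>

text \<open>Levi-Civita connection via the Koszul formula:
  2 g(nabla_X Y, Z) = g([X,Y],Z) - g([Y,Z],X) + g([Z,X],Y).\<close>
definition lc_conn :: "('a::euclidean_space \<Rightarrow> 'a \<Rightarrow> 'a) \<Rightarrow> 'a \<Rightarrow> 'a \<Rightarrow> 'a" where
  "lc_conn br X Y =
     (\<Sum>b\<in>Basis. ((inner (br X Y) b - inner (br Y b) X + inner (br b X) Y) / 2) *\<^sub>R b)"

definition curv :: "('a::euclidean_space \<Rightarrow> 'a \<Rightarrow> 'a) \<Rightarrow> 'a \<Rightarrow> 'a \<Rightarrow> 'a \<Rightarrow> 'a" where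
  "curv br X Y Z = lc_conn br X (lc_conn br Y Z) - lc_conn br Y (lc_conn br X Z)
                   - lc_conn br (br X Y) Z"

definition ricci :: "('a::euclidean_space \<Rightarrow> 'a \<Rightarrow> 'a) \<Rightarrow> 'a \<Rightarrow> 'a \<Rightarrow> real" where
  "ricci br Y Z = (\<Sum>a\<in>Basis. inner (curv br a Y Z) a)"

definition ricci_op :: "('a::euclidean_space \<Rightarrow> 'a \<Rightarrow> 'a) \<Rightarrow> 'a \<Rightarrow> 'a" where
  "ricci_op br Y = (\<Sum>b\<in>Basis. ricci br Y b *\<^sub>R b)"

definition is_derivation :: "('a::real_vector \<Rightarrow> 'a \<Rightarrow> 'a) \<Rightarrow> ('a \<Rightarrow> 'a) \<Rightarrow> bool" where
  "is_derivation br D \<longleftrightarrow> linear D \<and> (\<forall>X Y. D (br X Y) = br (D X) Y + br X (D Y))"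

definition algebraic_ricci_soliton :: "('a::euclidean_space \<Rightarrow> 'a \<Rightarrow> 'a) \<Rightarrow> bool" where
  "algebraic_ricci_soliton br \<longleftrightarrow>
     (\<exists>c D. is_derivation br D \<and> (\<forall>X. ricci_op br X = c *\<^sub>R X + D X))"

text \<open>The five-dimensional nilpotent Lie algebra. Basis vector E_k is axis k 1 in real^5;
  index type 5 has elements 1,2,3,4,5 (where the numeral 5 equals 0 in type 5), all distinct.\<close>
definition E5 :: "5 \<Rightarrow> real^5" where "E5 k = axis k 1"

definition n5_bracket :: "real \<Rightarrow> real \<Rightarrow> real \<Rightarrow> real \<Rightarrow> real \<Rightarrow> real \<Rightarrow> real
                          \<Rightarrow> real^5 \<Rightarrow> real^5 \<Rightarrow> real^5" where
  "n5_bracket m s u v w x y X Y =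
     (X$1 * Y$2 - X$2 * Y$1) *\<^sub>R (m *\<^sub>R E5 3 + s *\<^sub>R E5 4 + u *\<^sub>R E5 5)
   + (X$1 * Y$3 - X$3 * Y$1) *\<^sub>R (v *\<^sub>R E5 4 + w *\<^sub>R E5 5)
   + (X$1 * Y$4 - X$4 * Y$1) *\<^sub>R (x *\<^sub>R E5 5)
   + (X$2 * Y$3 - X$3 * Y$2) *\<^sub>R (y *\<^sub>R E5 5)"

end

theory Submission
  imports Defs
begin

text \<open>If \<open>Ric = c Id + D\<close> with \<open>D\<close> a derivation, then on a commutator \<open>Ric [X,Y] = c[X,Y] + [DX,Y] + [X,DY]\<close>,
  so \<open>Ric\<close> maps the derived algebra into its span. Here the derived algebra lies in
  \<open>span {E3, E4, E5}\<close>, but the \<open>E1\<close>- and \<open>E2\<close>-components of \<open>Ric [E1,E2] = Ric (mE3 + sE4 + uE5)\<close>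
  are \<open>muy/2\<close> and \<open>-(m(sv + uw) + sux)/2\<close>; the first forces \<open>u = 0\<close>, and then the second is
  \<open>-msv/2 \<noteq> 0\<close>.\<close>

lemma algebraic_ricci_soliton_annihilator:
  assumes "algebraic_ricci_soliton br" and "linear f" and "\<And>A B. f (br A B) = 0"
  shows "f (ricci_op br (br X Y)) = 0"
proof -
  obtain c D where der: "is_derivation br D" and ric: "\<And>Z. ricci_op br Z = c *\<^sub>R Z + D Z"
    using assms(1) unfolding algebraic_ricci_soliton_def by blast
  have "f (ricci_op br (br X Y)) = c *\<^sub>R f (br X Y) + f (br (D X) Y) + f (br X (D Y))"
    using der \<open>linear f\<close> unfolding ric is_derivation_def by (simp add: linear_add linear_scale)
  then show ?thesis
    using assms(3) by simp
qed

lemma exhaust_5: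
  fixes k :: 5
  shows "k = 1 \<or> k = 2 \<or> k = 3 \<or> k = 4 \<or> k = 5"
proof (induct k)
  case (of_int z)
  then have "z = 0 \<or> z = 1 \<or> z = 2 \<or> z = 3 \<or> z = 4" by fastforce
  then show ?case by auto
qed

lemma UNIV_5: "UNIV = {1, 2, 3, 4, 5::5}"
  using exhaust_5 by auto

lemma distinct_5: "(1::5) \<noteq> 2" "(1::5) \<noteq> 3" "(1::5) \<noteq> 4" "(1::5) \<noteq> 5"
  "(2::5) \<noteq> 3" "(2::5) \<noteq> 4" "(2::5) \<noteq> 5" "(3::5) \<noteq> 4" "(3::5) \<noteq> 5" "(4::5) \<noteq> 5"
  by simp_all

lemmas distinct_5_sym = distinct_5 distinct_5[symmetric]

lemma sum_5: "sum f (UNIV::5 set) = f 1 + f 2 + f 3 + f 4 + f 5"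
  unfolding UNIV_5 by (simp add: distinct_5 add.assoc)

lemma Basis_vec_5: "(Basis :: (real^5) set) = E5 ` UNIV"
  unfolding Basis_vec_def E5_def by auto

lemma inj_E5: "inj E5"
  unfolding E5_def inj_def by (metis axis_eq_axis zero_neq_one)

lemma sum_Basis_vec_5:
  "sum f (Basis :: (real^5) set) = f (E5 1) + f (E5 2) + f (E5 3) + f (E5 4) + f (E5 5)"
  unfolding Basis_vec_5 by (simp add: sum.reindex inj_E5 sum_5)

lemma inner_vec_5: "inner (a::real^5) b = a$1*b$1 + a$2*b$2 + a$3*b$3 + a$4*b$4 + a$5*b$5"
  unfolding inner_vec_def by (simp add: sum_5)

lemma E5_component: "E5 k $ j = (if j = k then 1 else 0)"
  unfolding E5_def axis_def by simp

lemma sum_Basis_vec_5_component: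
  "(\<Sum>b\<in>Basis. r b *\<^sub>R b :: real^5) $ k = r (E5 k)"
  unfolding sum_component vector_scaleR_component sum_Basis_vec_5
  using exhaust_5[of k] by (auto simp: E5_component distinct_5_sym)

lemma lc_conn_component:
  "lc_conn br X Y $ k = (inner (br X Y) (E5 k) - inner (br Y (E5 k)) X + inner (br (E5 k) X) Y) / 2"
  unfolding lc_conn_def sum_Basis_vec_5_component ..

lemma ricci_op_component: "ricci_op br Y $ k = ricci br Y (E5 k)"
  unfolding ricci_op_def sum_Basis_vec_5_component ..

lemma n5_bracket_component:
  "n5_bracket m s u v w x y X Y $ 1 = 0"
  "n5_bracket m s u v w x y X Y $ 2 = 0"
  "n5_bracket m s u v w x y X Y $ 3 = m * (X$1 * Y$2 - X$2 * Y$1)"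
  "n5_bracket m s u v w x y X Y $ 4 = s * (X$1 * Y$2 - X$2 * Y$1) + v * (X$1 * Y$3 - X$3 * Y$1)"
  "n5_bracket m s u v w x y X Y $ 5 = u * (X$1 * Y$2 - X$2 * Y$1) + w * (X$1 * Y$3 - X$3 * Y$1)
     + x * (X$1 * Y$4 - X$4 * Y$1) + y * (X$2 * Y$3 - X$3 * Y$2)"
  unfolding n5_bracket_def by (simp_all add: E5_component distinct_5_sym algebra_simps)

lemma n5_ricci_bracket_12:
  "ricci (n5_bracket m s u v w x y) (n5_bracket m s u v w x y (E5 1) (E5 2)) (E5 1) = m * u * y / 2"
  "ricci (n5_bracket m s u v w x y) (n5_bracket m s u v w x y (E5 1) (E5 2)) (E5 2)
     = - (m * (s * v + u * w) + s * u * x) / 2"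
  unfolding ricci_def curv_def
  by (simp_all add: sum_Basis_vec_5 inner_vec_5 lc_conn_component n5_bracket_component
      E5_component distinct_5_sym algebra_simps divide_simps)

theorem mainTheorem7:
  fixes m s u v w x y :: real
  assumes "m \<noteq> 0" "v \<noteq> 0" "x \<noteq> 0" "y \<noteq> 0" "s > 0"
  shows "\<not> algebraic_ricci_soliton (n5_bracket m s u v w x y)"
proof
  let ?br = "n5_bracket m s u v w x y"
  assume soliton: "algebraic_ricci_soliton ?br"
  have ricci_12_vanishes: "ricci ?br (?br (E5 1) (E5 2)) (E5 k) = 0" if "k = 1 \<or> k = 2" for k
    using algebraic_ricci_soliton_annihilator[OF soliton, of "\<lambda>z. z $ k"] that
    by (auto simp: ricci_op_component n5_bracket_component bounded_linear_vec_nth bounded_linear.linear)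
  from ricci_12_vanishes[of 1] assms have "u = 0"
    by (simp add: n5_ricci_bracket_12)
  with ricci_12_vanishes[of 2] assms show False
    by (simp add: n5_ricci_bracket_12)
qed

end
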